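(* Let $i\ge1$ and let $(a_j)_{j\ge1}$ satisfy $0<a_j\le Aj$ for some $A>0$. Let $y_0\in\mathcal X^+_{1,i}$ with $y_{i,0}>0$, and let $y$ be the solution of $dy/dt=F(y)$, $y(0)=y_0$. Then there exist $t_*\in(0,\infty]$ and $t_{*,1}\in[t_*,\infty]$ such that: - $y_i(t)>0$ for $t\in[0,t_* )$, and $y_i(t_* )=0$ if $t_*<\infty$; - $y_{ki}(t)>0$ for $t\in(0,t_* )$ and all $k\ge2$; - $y_j(t)\ge0$ for $t\in[0,t_* )$ and $j\ge i+1$; - $y_j(t)>0$ for $t\in[0,t_* )$ whenever $j\ge i+1$ and $y_{j,0}>0$; - $\frac{dy_i}{dt}(t)<0$ for $t\in[0,t_{*,1})$; - $\|y(t)\|_{1,1}=\|y_0\|_{1,1}$ for $t\in[0,t_* )$. If $t_*<\infty$, then $t_{*,1}>t_*$, and the second, third, fourth and last properties also hold at $t=t_*$.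
   Context: $\|x\|_{1,1}=\sum_j j|x_j|$, $\mathcal X_{1,1}=\{x:\|x\|_{1,1}<\infty\}$, $\mathcal X_{1,i}=\{x\in\mathcal X_{1,1}:x_j=0 \text{ for } j<i\}$, and $\mathcal X^+_{1,i}$ is the subset with nonnegative entries. $F$ is defined by - $F_j(y)=0$ for $j<i$; - $F_i(y)=-a_iy_i-\sum_{j\ge i}a_jy_j$; - $F_j(y)=a_{j-i}y_{j-i}-a_jy_j$ for $j\ge i+1$. The solution $y\in C([0,\infty);\mathcal X_{1,i})$, with $C^1$ components, exists and is unique. *)

theory Defs
  imports "HOL-Analysis.Analysis"
begin

text \<open>Sequences x = (x_j)_{j \<ge> 1} are modelled as functions nat => real;
  the entry at index 0 is forced to be 0 by membership in X_{1,i} (i \<ge> 1).\<close>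

definition norm11 :: "(nat \<Rightarrow> real) \<Rightarrow> real" where
  "norm11 x = (\<Sum>j. real j * \<bar>x j\<bar>)"

definition X11 :: "(nat \<Rightarrow> real) set" where
  "X11 = {x. summable (\<lambda>j. real j * \<bar>x j\<bar>)}"

definition X1i :: "nat \<Rightarrow> (nat \<Rightarrow> real) set" where
  "X1i i = {x \<in> X11. \<forall>j<i. x j = 0}"

definition X1i_plus :: "nat \<Rightarrow> (nat \<Rightarrow> real) set" where
  "X1i_plus i = {x \<in> X1i i. \<forall>j. x j \<ge> 0}"

definition F :: "(nat \<Rightarrow> real) \<Rightarrow> nat \<Rightarrow> (nat \<Rightarrow> real) \<Rightarrow> nat \<Rightarrow> real" where
  "F a i y j =
     (if j < i then 0
      else if j = i then - a i * y i - (\<Sum>n. a (n + i) * y (n + i))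
      else a (j - i) * y (j - i) - a j * y j)"

definition is_solution :: "(nat \<Rightarrow> real) \<Rightarrow> nat \<Rightarrow> (nat \<Rightarrow> real) \<Rightarrow> (real \<Rightarrow> nat \<Rightarrow> real) \<Rightarrow> bool" where
  "is_solution a i y0 y \<longleftrightarrow>
     y 0 = y0 \<and>
     (\<forall>t\<ge>0. y t \<in> X1i i) \<and>
     (\<forall>t\<ge>0. ((\<lambda>s. norm11 (\<lambda>j. y s j - y t j)) \<longlongrightarrow> 0) (at t within {0..})) \<and>
     (\<forall>j. \<forall>t\<ge>0. ((\<lambda>s. y s j) has_real_derivative F a i (y t) j) (at t within {0..})) \<and>
     (\<forall>j. continuous_on {0..} (\<lambda>t. F a i (y t) j))"

end

theory Submission
  imports Defs
begin

text \<open>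
  Let \<open>t\<^sub>*\<close> be the first zero of \<open>y\<^sub>i\<close> (or \<open>\<infinity>\<close>).  On \<open>[0, t\<^sub>*]\<close> the source term
  \<open>a\<^sub>j\<^sub>-\<^sub>i y\<^sub>j\<^sub>-\<^sub>i\<close> of every equation \<open>j > i\<close> is nonnegative by strong induction on \<open>j\<close>, so the
  integrating factor \<open>exp (a\<^sub>j t)\<close> gives \<open>y\<^sub>j(t) \<ge> exp(-a\<^sub>j t) y\<^sub>j(0)\<close>; the chain
  \<open>y\<^sub>i \<rightarrow> y\<^sub>2\<^sub>i \<rightarrow> y\<^sub>3\<^sub>i \<rightarrow> \<dots>\<close> of strictly positive sources makes every \<open>y\<^sub>k\<^sub>i\<close> positive
  for \<open>t > 0\<close>.  Then \<open>F\<^sub>i(y) = -a\<^sub>i y\<^sub>i - \<Sum>\<^sub>n a\<^sub>n\<^sub>+\<^sub>i y\<^sub>n\<^sub>+\<^sub>i < 0\<close> up to \<open>t\<^sub>*\<close>, and by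
  continuity a little beyond it.

  Mass conservation is proved with truncated moments \<open>\<Sum>\<^sub>j\<^sub><\<^sub>K w\<^sub>j y\<^sub>j\<close>: an exact
  summation-by-parts identity (moment_identity) writes their derivative as
  \<open>\<Sum>\<^sub>m a\<^sub>m y\<^sub>m c\<^sub>m\<close>.  For \<open>w\<^sub>j = j\<close> all \<open>c\<^sub>m \<le> 0\<close>, so the mass cannot increase; for the capped
  weights \<open>w\<^sub>j = min j N\<close> the negative coefficients sit only in the tails, which are
  uniformly small on compact time intervals (a Dini-type argument using the continuity of
  \<open>t \<mapsto> y(t)\<close> in \<open>\<parallel>\<cdot>\<parallel>\<^sub>1\<^sub>,\<^sub>1\<close>), so the mass cannot decrease either.
\<close>

lemma mvt_on_halfline:
  fixes f f' :: "real \<Rightarrow> real"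
  assumes t: "0 < t"
    and der: "\<And>s. 0 \<le> s \<Longrightarrow> (f has_real_derivative f' s) (at s within {0..})"
  shows "\<exists>\<xi>. 0 < \<xi> \<and> \<xi> < t \<and> f t - f 0 = t * f' \<xi>"
proof -
  have cont: "continuous_on {0..t} f"
    by (rule continuous_on_subset[OF DERIV_continuous_on[of "{0..}" f f']]) (auto intro: der)
  have der_open: "(f has_real_derivative f' s) (at s)" if "0 < s" for s
  proof -
    have "(f has_real_derivative f' s) (at s within {0<..})"
      using der[of s] that by (auto intro: has_field_derivative_subset)
    then show ?thesis using that at_within_open[of s "{0<..}"] by simp
  qed
  obtain l \<xi> where "0 < \<xi>" "\<xi> < t" "DERIV f \<xi> :> l" "f t - f 0 = (t - 0) * l"
    using MVT[OF t cont] der_open real_differentiable_def by metis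
  moreover have "l = f' \<xi>" using DERIV_unique[OF \<open>DERIV f \<xi> :> l\<close> der_open[OF \<open>0 < \<xi>\<close>]] .
  ultimately show ?thesis by auto
qed

text \<open>Integrating-factor comparison: if \<open>f' = g - b f\<close> with a nonnegative (positive) source \<open>g\<close>,
  then \<open>f\<close> stays above (strictly above) the free decay \<open>exp(-b t) f(0)\<close>.\<close>

lemma exp_lower_bound:
  fixes f g :: "real \<Rightarrow> real" and b t :: real
  assumes t: "0 \<le> t"
    and der: "\<And>s. 0 \<le> s \<Longrightarrow> (f has_real_derivative (g s - b * f s)) (at s within {0..})"
    and g: "\<And>s. 0 < s \<Longrightarrow> s < t \<Longrightarrow> g s \<ge> 0"
  shows "f t \<ge> exp (-(b * t)) * f 0"
    and "0 < t \<Longrightarrow> (\<And>s. 0 < s \<Longrightarrow> s < t \<Longrightarrow> g s > 0) \<Longrightarrow> f t > exp (-(b * t)) * f 0"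
proof -
  define h where "h s = exp (b * s) * f s" for s
  have h_der: "(h has_real_derivative (exp (b * s) * g s)) (at s within {0..})" if "0 \<le> s" for s
  proof -
    have "((\<lambda>s. exp (b * s) * f s) has_real_derivative
        (exp (b * s) * b) * f s + (g s - b * f s) * exp (b * s)) (at s within {0..})"
      by (intro DERIV_mult der that derivative_eq_intros) auto
    then show ?thesis unfolding h_def by (simp add: algebra_simps)
  qed
  have h_grows: "h 0 \<le> h t \<and> (0 < t \<longrightarrow> (\<forall>s. 0 < s \<longrightarrow> s < t \<longrightarrow> g s > 0) \<longrightarrow> h 0 < h t)"
  proof (cases "t = 0")
    case False
    then have "0 < t" using t by simp
    then obtain \<xi> where \<xi>: "0 < \<xi>" "\<xi> < t" "h t - h 0 = t * (exp (b * \<xi>) * g \<xi>)"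
      using mvt_on_halfline[OF _ h_der] by blast
    have "0 \<le> t * (exp (b * \<xi>) * g \<xi>)" using g[OF \<xi>(1,2)] \<open>0 < t\<close> by simp
    moreover have "(\<forall>s. 0 < s \<longrightarrow> s < t \<longrightarrow> g s > 0) \<longrightarrow> 0 < t * (exp (b * \<xi>) * g \<xi>)"
      using \<xi> \<open>0 < t\<close> by simp
    ultimately show ?thesis using \<xi>(3) by auto
  qed simp
  have h_inv: "exp (-(b * t)) * h t = f t"
    unfolding h_def by (simp add: exp_minus field_simps)
  have h_0: "h 0 = f 0" by (simp add: h_def)
  show "f t \<ge> exp (-(b * t)) * f 0"
  proof -
    have "exp (-(b * t)) * h 0 \<le> exp (-(b * t)) * h t" using h_grows by (intro mult_left_mono) auto
    then show ?thesis using h_inv h_0 by simp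
  qed
  show "0 < t \<Longrightarrow> (\<And>s. 0 < s \<Longrightarrow> s < t \<Longrightarrow> g s > 0) \<Longrightarrow> f t > exp (-(b * t)) * f 0"
  proof -
    assume "0 < t" "\<And>s. 0 < s \<Longrightarrow> s < t \<Longrightarrow> g s > 0"
    then have "exp (-(b * t)) * h 0 < exp (-(b * t)) * h t" using h_grows by (intro mult_strict_left_mono) auto
    then show ?thesis using h_inv h_0 by simp
  qed
qed

lemma negative_near:
  fixes g :: "real \<Rightarrow> real"
  assumes g: "continuous_on {0..} g" and T: "0 \<le> T" and neg: "g T < 0"
  shows "\<exists>d>0. \<forall>s. 0 \<le> s \<and> \<bar>s - T\<bar> < d \<longrightarrow> g s < 0"
proof -
  obtain d where "d > 0" and d: "\<forall>s\<in>{0..}. dist s T < d \<longrightarrow> dist (g s) (g T) < - g T"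
    using g T neg unfolding continuous_on_iff by (metis atLeast_iff neg_0_less_iff_less)
  then show ?thesis by (intro exI[of _ d]) (auto simp: dist_real_def)
qed

lemma small_share:
  fixes e c :: real
  assumes "0 < e" "0 \<le> c"
  obtains \<delta> where "0 < \<delta>" "\<delta> + c * \<delta> = e / 2"
proof -
  define \<delta> where "\<delta> = e / (2 * (1 + c))"
  have "\<delta> * (1 + c) = e / 2"
    unfolding \<delta>_def using assms by (simp add: field_simps add_nonneg_eq_0_iff)
  moreover have "0 < \<delta>" unfolding \<delta>_def using assms by simp
  ultimately show ?thesis using that[of \<delta>] by (simp add: algebra_simps)
qed

lemma uniformly_small_on_compact:
  fixes f :: "nat \<Rightarrow> 'a::topological_space \<Rightarrow> real"
  assumes S: "compact S"
    and cont: "\<And>L. continuous_on S (f L)"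
    and anti: "\<And>L L' s. s \<in> S \<Longrightarrow> L \<le> L' \<Longrightarrow> f L' s \<le> f L s"
    and lim: "\<And>s. s \<in> S \<Longrightarrow> (\<lambda>L. f L s) \<longlonglongrightarrow> 0"
    and e: "e > 0"
  shows "\<exists>L0. \<forall>L\<ge>L0. \<forall>s\<in>S. f L s < e"
proof -
  have "\<forall>L. \<exists>U. open U \<and> U \<inter> S = f L -` {..<e} \<inter> S"
    using cont by (simp add: continuous_on_open_invariant)
  then obtain U where U: "\<forall>L. open (U L) \<and> U L \<inter> S = f L -` {..<e} \<inter> S"
    by (rule choice[THEN exE])
  have U_iff: "s \<in> U L \<longleftrightarrow> f L s < e" if "s \<in> S" for s L
  proof -
    have "s \<in> U L \<inter> S \<longleftrightarrow> s \<in> f L -` {..<e} \<inter> S" using U by simp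
    then show ?thesis using that by simp
  qed
  have "S \<subseteq> (\<Union>L\<in>UNIV. U L)"
  proof
    fix s assume s: "s \<in> S"
    obtain L where "f L s < e"
      using order_tendstoD(2)[OF lim[OF s] e] by (auto simp: eventually_sequentially)
    then show "s \<in> (\<Union>L\<in>UNIV. U L)" using U_iff[OF s] by blast
  qed
  moreover have "open (U L)" for L using U by simp
  ultimately obtain D where D: "finite D" "S \<subseteq> (\<Union>L\<in>D. U L)"
    using compactE_image[OF S, of UNIV U] by metis
  have "f L s < e" if L: "Max (insert 0 D) \<le> L" and s: "s \<in> S" for L s
  proof -
    obtain L' where "L' \<in> D" and "s \<in> U L'" using D(2) s by blast
    then have "L' \<le> L" using D(1) L Max_ge[of "insert 0 D" L'] by simp
    then have "f L s \<le> f L' s" using anti[OF s] by blast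
    also have "f L' s < e" using U_iff[OF s] \<open>s \<in> U L'\<close> by blast
    finally show ?thesis .
  qed
  then show ?thesis by blast
qed

section \<open>Tails in \<open>X\<^sub>1\<^sub>,\<^sub>1\<close>\<close>

definition tail11 :: "nat \<Rightarrow> (nat \<Rightarrow> real) \<Rightarrow> real" where
  "tail11 L x = (\<Sum>j. if L \<le> j then real j * \<bar>x j\<bar> else 0)"

lemma summable_tail11:
  assumes "x \<in> X11"
  shows "summable (\<lambda>j. if L \<le> j then real j * \<bar>x j\<bar> else 0)"
  by (rule summable_comparison_test'[where N=0]) (use assms in \<open>auto simp: X11_def\<close>)

lemma norm11_split:
  assumes x: "x \<in> X11"
  shows "norm11 x = (\<Sum>j<L. real j * \<bar>x j\<bar>) + tail11 L x"
proof -
  have head: "summable (\<lambda>j. if j < L then real j * \<bar>x j\<bar> else 0)"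
    by (rule summable_finite[of "{..<L}"]) auto
  have "norm11 x = (\<Sum>j. (if j < L then real j * \<bar>x j\<bar> else 0) + (if L \<le> j then real j * \<bar>x j\<bar> else 0))"
    unfolding norm11_def by (rule arg_cong[where f=suminf]) auto
  also have "\<dots> = (\<Sum>j. if j < L then real j * \<bar>x j\<bar> else 0) + tail11 L x"
    unfolding tail11_def by (rule suminf_add[OF head summable_tail11[OF x], symmetric])
  also have "(\<Sum>j. if j < L then real j * \<bar>x j\<bar> else 0) = (\<Sum>j<L. real j * \<bar>x j\<bar>)"
    by (subst suminf_finite[of "{..<L}"]) auto
  finally show ?thesis .
qed

lemma tail11_nonneg: "x \<in> X11 \<Longrightarrow> 0 \<le> tail11 L x"
  unfolding tail11_def by (rule suminf_nonneg[OF summable_tail11]) auto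

lemma tail11_antimono: "x \<in> X11 \<Longrightarrow> L \<le> L' \<Longrightarrow> tail11 L' x \<le> tail11 L x"
  unfolding tail11_def by (rule suminf_le[OF _ summable_tail11 summable_tail11]) auto

lemma tail11_tendsto_0:
  assumes x: "x \<in> X11"
  shows "(\<lambda>L. tail11 L x) \<longlonglongrightarrow> 0"
proof -
  have "(\<lambda>L. norm11 x - (\<Sum>j<L. real j * \<bar>x j\<bar>)) \<longlonglongrightarrow> norm11 x - norm11 x"
    using x unfolding norm11_def X11_def by (intro tendsto_diff tendsto_const summable_LIMSEQ) simp
  moreover have "tail11 L x = norm11 x - (\<Sum>j<L. real j * \<bar>x j\<bar>)" for L
    using norm11_split[OF x, of L] by simp
  ultimately show ?thesis by simp
qed

lemma X11_diff:
  assumes "x \<in> X11" and "x' \<in> X11"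
  shows "(\<lambda>j. x j - x' j) \<in> X11"
proof -
  have "summable (\<lambda>j. real j * \<bar>x j\<bar> + real j * \<bar>x' j\<bar>)"
    using assms unfolding X11_def by (intro summable_add) auto
  moreover have "norm (real j * \<bar>x j - x' j\<bar>) \<le> real j * \<bar>x j\<bar> + real j * \<bar>x' j\<bar>" for j
  proof -
    have "real j * \<bar>x j - x' j\<bar> \<le> real j * (\<bar>x j\<bar> + \<bar>x' j\<bar>)"
      by (intro mult_left_mono) auto
    then show ?thesis by (simp add: algebra_simps)
  qed
  ultimately show ?thesis unfolding X11_def by (auto intro: summable_comparison_test'[where N=0])
qed

lemma tail11_perturb:
  assumes x: "x \<in> X11" and x': "x' \<in> X11"
  shows "tail11 L x \<le> tail11 L x' + norm11 (\<lambda>j. x j - x' j)"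
proof -
  have d: "summable (\<lambda>j. real j * \<bar>x j - x' j\<bar>)"
    using X11_diff[OF x x'] unfolding X11_def by simp
  have "tail11 L x \<le> (\<Sum>j. (if L \<le> j then real j * \<bar>x' j\<bar> else 0) + real j * \<bar>x j - x' j\<bar>)"
    unfolding tail11_def
  proof (rule suminf_le[OF _ summable_tail11[OF x] summable_add[OF summable_tail11[OF x'] d]])
    fix j
    have "real j * \<bar>x j\<bar> \<le> real j * (\<bar>x' j\<bar> + \<bar>x j - x' j\<bar>)"
      by (intro mult_left_mono) auto
    then show "(if L \<le> j then real j * \<bar>x j\<bar> else 0)
        \<le> (if L \<le> j then real j * \<bar>x' j\<bar> else 0) + real j * \<bar>x j - x' j\<bar>"
      by (auto simp: algebra_simps)
  qed
  also have "\<dots> = tail11 L x' + norm11 (\<lambda>j. x j - x' j)"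
    unfolding tail11_def norm11_def by (rule suminf_add[OF summable_tail11[OF x'] d, symmetric])
  finally show ?thesis .
qed

lemma tail11_uniformly_small:
  fixes z :: "real \<Rightarrow> nat \<Rightarrow> real"
  assumes mem: "\<And>s. 0 \<le> s \<Longrightarrow> z s \<in> X11"
    and cont: "\<And>s. 0 \<le> s \<Longrightarrow> ((\<lambda>r. norm11 (\<lambda>j. z r j - z s j)) \<longlongrightarrow> 0) (at s within {0..})"
    and e: "e > 0"
  shows "\<exists>L0. \<forall>L\<ge>L0. \<forall>s\<in>{0..t}. tail11 L (z s) < e"
proof -
  have tail_cont: "continuous_on {0..t} (\<lambda>s. tail11 L (z s))" for L
  proof -
    have "((\<lambda>r. tail11 L (z r)) \<longlongrightarrow> tail11 L (z s)) (at s within {0..})" if s: "0 \<le> s" for s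
    proof -
      have "norm (tail11 L (z r) - tail11 L (z s)) \<le> norm11 (\<lambda>j. z r j - z s j)"
        if "r \<in> {0..}" for r
      proof -
        have r: "z r \<in> X11" using mem that by simp
        have "norm11 (\<lambda>j. z s j - z r j) = norm11 (\<lambda>j. z r j - z s j)"
          unfolding norm11_def by (simp add: abs_minus_commute)
        then show ?thesis
          using tail11_perturb[OF r mem[OF s], of L] tail11_perturb[OF mem[OF s] r, of L] by simp
      qed
      then have "\<forall>\<^sub>F r in at s within {0..}.
          norm (tail11 L (z r) - tail11 L (z s)) \<le> norm11 (\<lambda>j. z r j - z s j)"
        unfolding eventually_at_filter by (auto intro!: always_eventually)
      then have "((\<lambda>r. tail11 L (z r) - tail11 L (z s)) \<longlongrightarrow> 0) (at s within {0..})"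
        by (rule Lim_null_comparison[OF _ cont[OF s]])
      then show ?thesis by (simp only: LIM_zero_iff)
    qed
    then have "continuous_on {0..} (\<lambda>s. tail11 L (z s))"
      by (simp add: continuous_on_def)
    then show ?thesis by (rule continuous_on_subset) auto
  qed
  have tail_anti: "tail11 L' (z s) \<le> tail11 L (z s)" if "s \<in> {0..t}" "L \<le> L'" for L L' s
    using tail11_antimono mem that by simp
  have tail_lim: "(\<lambda>L. tail11 L (z s)) \<longlonglongrightarrow> 0" if "s \<in> {0..t}" for s
    using tail11_tendsto_0 mem that by simp
  show ?thesis
    by (rule uniformly_small_on_compact[where S="{0..t}" and f="\<lambda>L s. tail11 L (z s)",
          OF compact_Icc tail_cont tail_anti tail_lim e])
qed

section \<open>The vector field \<open>F\<close> and its moments\<close>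

lemma F_at: "F a i x i = - a i * x i - (\<Sum>n. a (n + i) * x (n + i))"
  unfolding F_def by simp

lemma F_above: "i < j \<Longrightarrow> F a i x j = a (j - i) * x (j - i) - a j * x j"
  unfolding F_def by simp

text \<open>Coefficient of \<open>a\<^sub>m x\<^sub>m\<close> in the truncated moment \<open>\<Sum>\<^sub>j\<^sub><\<^sub>K w\<^sub>j F\<^sub>j(x)\<close>: the term \<open>-w\<^sub>i\<close>
  from the equation for \<open>y\<^sub>i\<close>, the gain \<open>w\<^sub>m\<^sub>+\<^sub>i\<close> if \<open>m + i\<close> is still counted, and the loss \<open>-w\<^sub>m\<close>.\<close>

definition moment_coef :: "nat \<Rightarrow> nat \<Rightarrow> (nat \<Rightarrow> real) \<Rightarrow> nat \<Rightarrow> real" where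
  "moment_coef i K w m =
     (if i < K then - w i else 0) + (if m < K then (if m + i < K then w (m + i) else 0) - w m else 0)"

text \<open>Summation by parts for the finitely many equations \<open>j < K\<close>.\<close>

lemma finite_moment_identity:
  fixes w x :: "nat \<Rightarrow> real"
  assumes i: "i \<ge> 1" and x: "\<forall>m<i. x m = 0"
  shows "(\<Sum>j<K. w j * F a i x j) = (if i < K then - w i * (\<Sum>n. a (n + i) * x (n + i)) else 0)
     + (\<Sum>m<K. a m * x m * ((if m + i < K then w (m + i) else 0) - w m))"
proof (induction K)
  case (Suc K)
  have new_gain: "(\<Sum>m<K. a m * x m * ((if m + i < Suc K then w (m + i) else 0) - w m))
     = (\<Sum>m<K. a m * x m * ((if m + i < K then w (m + i) else 0) - w m))
       + (if i \<le> K then a (K - i) * x (K - i) * w K else 0)"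
  proof -
    have "(\<Sum>m<K. a m * x m * ((if m + i < Suc K then w (m + i) else 0) - w m))
       = (\<Sum>m<K. a m * x m * ((if m + i < K then w (m + i) else 0) - w m))
         + (\<Sum>m<K. if m = K - i \<and> i \<le> K then a m * x m * w K else 0)"
      by (subst sum.distrib[symmetric]) (rule sum.cong, auto simp: algebra_simps less_Suc_eq)
    also have "(\<Sum>m<K. if m = K - i \<and> i \<le> K then a m * x m * w K else 0)
        = (if i \<le> K then a (K - i) * x (K - i) * w K else 0)"
    proof (cases "i \<le> K")
      case True
      then have "K - i < K" using i by simp
      with True show ?thesis by (simp add: sum.delta')
    qed simp
    finally show ?thesis .
  qed
  have "x 0 = 0" using x i by simp
  then consider "K < i" | "K = i" | "i < K" by linarith
  then show ?case
    using Suc x \<open>x 0 = 0\<close> i unfolding sum.lessThan_Suc new_gain F_def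
    by cases (auto simp: algebra_simps)
qed simp

lemma moment_identity:
  fixes w x :: "nat \<Rightarrow> real"
  assumes i: "i \<ge> 1" and x: "\<forall>m<i. x m = 0" and rates: "summable (\<lambda>n. a (n + i) * x (n + i))"
  shows "summable (\<lambda>m. a m * x m * moment_coef i K w m)"
    and "(\<Sum>j<K. w j * F a i x j) = (\<Sum>m. a m * x m * moment_coef i K w m)"
proof -
  define u where "u m = a m * x m" for m
  have u: "summable u" using rates summable_iff_shift[of u i] unfolding u_def by simp
  have S: "(\<Sum>n. a (n + i) * x (n + i)) = suminf u"
    using suminf_split_initial_segment[OF u, of i] x unfolding u_def by simp
  define g where "g m = u m * (if i < K then - w i else 0)" for m
  define h where "h m = (if m < K then u m * ((if m + i < K then w (m + i) else 0) - w m) else 0)" for m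
  have g: "summable g" unfolding g_def by (intro summable_mult2 u)
  have h: "summable h" unfolding h_def by (rule summable_finite[of "{..<K}"]) auto
  have split: "(\<lambda>m. a m * x m * moment_coef i K w m) = (\<lambda>m. g m + h m)"
    unfolding moment_coef_def g_def h_def u_def by (auto simp: algebra_simps)
  show "summable (\<lambda>m. a m * x m * moment_coef i K w m)"
    unfolding split by (intro summable_add g h)
  have "suminf g = suminf u * (if i < K then - w i else 0)"
    unfolding g_def by (rule suminf_mult2[symmetric, OF u])
  moreover have "suminf h = (\<Sum>m<K. a m * x m * ((if m + i < K then w (m + i) else 0) - w m))"
    unfolding h_def u_def by (subst suminf_finite[of "{..<K}"]) auto
  moreover have "(\<Sum>m. a m * x m * moment_coef i K w m) = suminf g + suminf h"
    unfolding split using suminf_add[OF g h] by simp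
  ultimately show "(\<Sum>j<K. w j * F a i x j) = (\<Sum>m. a m * x m * moment_coef i K w m)"
    using finite_moment_identity[OF i x] S by (cases "i < K") simp_all
qed

lemma moment_coef_mass_nonpos: "i \<ge> 1 \<Longrightarrow> moment_coef i K real m \<le> 0"
  unfolding moment_coef_def by auto

lemma moment_coef_capped_lower:
  assumes "i \<ge> 1" "N \<ge> i" "K > N"
  shows "moment_coef i K (\<lambda>j. real (min j N)) m
     \<ge> - (real i * (if N + 1 - i \<le> m then 1 else 0) + real N * (if K - i \<le> m then 1 else 0))"
  using assms unfolding moment_coef_def by (auto simp: min_def)

locale fragmentation_solution =
  fixes i :: nat and a :: "nat \<Rightarrow> real" and A :: real
    and y0 :: "nat \<Rightarrow> real" and y :: "real \<Rightarrow> nat \<Rightarrow> real"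
  assumes i_pos: "i \<ge> 1"
    and A_pos: "A > 0"
    and a_pos: "\<forall>j\<ge>1. a j > 0"
    and a_le: "\<forall>j\<ge>1. a j \<le> A * real j"
    and y0: "y0 \<in> X1i_plus i"
    and sol: "is_solution a i y0 y"
begin

lemma y_initial: "y 0 = y0"
  using sol unfolding is_solution_def by simp

lemma y_in_X11: "0 \<le> t \<Longrightarrow> y t \<in> X11"
  using sol unfolding is_solution_def X1i_def by auto

lemma y_below: "0 \<le> t \<Longrightarrow> j < i \<Longrightarrow> y t j = 0"
  using sol unfolding is_solution_def X1i_def by auto

lemma y_deriv: "0 \<le> t \<Longrightarrow> ((\<lambda>s. y s j) has_real_derivative F a i (y t) j) (at t within {0..})"
  using sol unfolding is_solution_def by auto

lemma F_continuous: "continuous_on {0..} (\<lambda>t. F a i (y t) j)"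
  using sol unfolding is_solution_def by auto

lemma y_norm_continuous:
  "0 \<le> t \<Longrightarrow> ((\<lambda>s. norm11 (\<lambda>j. y s j - y t j)) \<longlongrightarrow> 0) (at t within {0..})"
  using sol unfolding is_solution_def by auto

lemma y_continuous: "continuous_on {0..} (\<lambda>s. y s j)"
  by (rule DERIV_continuous_on[where D="\<lambda>t. F a i (y t) j"]) (auto intro: y_deriv)

lemma y0_in_X11: "y0 \<in> X11"
  using y_in_X11[of 0] y_initial by simp

lemma y0_nonneg: "y0 j \<ge> 0"
  using y0 unfolding X1i_plus_def by auto

lemma a_pos_at: "1 \<le> j \<Longrightarrow> 0 < a j"
  using a_pos by simp

text \<open>The total fragmentation rate out of sizes \<open>\<ge> i\<close> is finite, because \<open>a\<^sub>j \<le> A j\<close>.\<close>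

lemma summable_rates: "0 \<le> t \<Longrightarrow> summable (\<lambda>n. a (n + i) * y t (n + i))"
proof -
  assume t: "0 \<le> t"
  have "summable (\<lambda>n. A * (real (n + i) * \<bar>y t (n + i)\<bar>))"
    using y_in_X11[OF t] summable_iff_shift[of "\<lambda>j. real j * \<bar>y t j\<bar>" i]
    unfolding X11_def by (intro summable_mult) simp
  moreover have "norm (a (n + i) * y t (n + i)) \<le> A * (real (n + i) * \<bar>y t (n + i)\<bar>)" for n
  proof -
    have "0 < a (n + i)" "a (n + i) \<le> A * real (n + i)"
      using a_pos_at[of "n + i"] a_le[rule_format, of "n + i"] i_pos by auto
    then show ?thesis by (simp add: abs_mult mult_right_mono flip: mult.assoc)
  qed
  ultimately show ?thesis by (rule summable_comparison_test'[where N=0])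
qed

lemma moment_deriv:
  "0 \<le> s \<Longrightarrow> ((\<lambda>s. \<Sum>j<K. w j * y s j) has_real_derivative (\<Sum>j<K. w j * F a i (y s) j))
     (at s within {0..})"
  by (intro DERIV_sum DERIV_cmult y_deriv)

text \<open>The first zero \<open>t\<^sub>*\<close> of \<open>y\<^sub>i\<close> (\<open>\<infinity>\<close> if there is none).\<close>

lemma first_zero:
  assumes y0i: "y0 i > 0"
  shows "\<exists>ts::ereal. ts > 0 \<and> (\<forall>s. 0 \<le> s \<and> ereal s < ts \<longrightarrow> y s i > 0)
     \<and> (\<forall>s. ts = ereal s \<longrightarrow> y s i = 0)"
proof -
  define Z where "Z = {0..} \<inter> (\<lambda>t. y t i) -` {0}"
  have pos_before: "y s i > 0" if s: "0 \<le> s" and before: "\<forall>z\<in>Z. s < z" for s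
  proof (rule ccontr)
    assume "\<not> y s i > 0"
    then have "y s i \<le> 0" "0 \<le> y 0 i" using y0i y_initial by auto
    moreover have "continuous_on {0..s} (\<lambda>t. y t i)"
      using continuous_on_subset[OF y_continuous] by auto
    ultimately obtain z where "0 \<le> z" "z \<le> s" "y z i = 0"
      using IVT2'[of "\<lambda>t. y t i" s 0 0] s by auto
    then have "z \<in> Z" unfolding Z_def by simp
    then show False using before \<open>z \<le> s\<close> by fastforce
  qed
  show ?thesis
  proof (cases "Z = {}")
    case True
    then show ?thesis using pos_before by (intro exI[of _ \<infinity>]) auto
  next
    case False
    have "closed Z" unfolding Z_def by (rule continuous_closed_preimage[OF y_continuous]) auto
    moreover have "bdd_below Z" unfolding Z_def by (auto intro: bdd_belowI[of _ 0])
    ultimately have inZ: "Inf Z \<in> Z" using closed_contains_Inf False by blast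
    then have "Inf Z > 0" using y0i y_initial unfolding Z_def by (auto simp: order.order_iff_strict)
    moreover have "\<forall>s. 0 \<le> s \<and> s < Inf Z \<longrightarrow> y s i > 0"
      using pos_before cInf_lower[OF _ \<open>bdd_below Z\<close>] by force
    moreover have "y (Inf Z) i = 0" using inZ unfolding Z_def by auto
    ultimately show ?thesis by (intro exI[of _ "ereal (Inf Z)"]) auto
  qed
qed

end

section \<open>The solution up to the first zero of \<open>y\<^sub>i\<close>\<close>

locale fragmentation_positive_phase = fragmentation_solution +
  fixes ts :: ereal
  assumes ts_pos: "ts > 0"
    and yi_pos: "\<forall>s. 0 \<le> s \<and> ereal s < ts \<longrightarrow> y s i > 0"
    and yi_zero: "\<forall>s. ts = ereal s \<longrightarrow> y s i = 0"
begin

lemma yi_nonneg: "0 \<le> s \<Longrightarrow> ereal s \<le> ts \<Longrightarrow> y s i \<ge> 0"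
  using yi_pos yi_zero by (cases "ereal s < ts") auto

text \<open>All sizes above \<open>i\<close> receive a nonnegative source, hence dominate their free decay.\<close>

lemma y_exp_lower: "i < j \<Longrightarrow> 0 \<le> t \<Longrightarrow> ereal t \<le> ts \<Longrightarrow> exp (-(a j * t)) * y0 j \<le> y t j"
proof (induction j arbitrary: t rule: less_induct)
  case (less j)
  have gain_nonneg: "0 \<le> a (j - i) * y s (j - i)" if "0 < s" "s < t" for s
  proof -
    have s: "0 \<le> s" "ereal s \<le> ts" using that less.prems by (auto intro: order_trans[of _ "ereal t"])
    consider "j - i < i" | "j - i = i" | "i < j - i" by linarith
    then have "0 \<le> y s (j - i)"
    proof cases
      case 1
      then show ?thesis using y_below[OF s(1)] by simp
    next
      case 2
      then show ?thesis using yi_nonneg[OF s] by simp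
    next
      case 3
      then have "exp (-(a (j - i) * s)) * y0 (j - i) \<le> y s (j - i)"
        using less.IH[of "j - i" s] s i_pos by simp
      moreover have "0 \<le> exp (-(a (j - i) * s)) * y0 (j - i)" using y0_nonneg by simp
      ultimately show ?thesis by linarith
    qed
    moreover have "0 < a (j - i)" using a_pos_at less.prems(1) by simp
    ultimately show ?thesis by simp
  qed
  have "((\<lambda>s. y s j) has_real_derivative (a (j - i) * y s (j - i) - a j * y s j)) (at s within {0..})"
    if "0 \<le> s" for s
    using y_deriv[OF that, of j] F_above[OF less.prems(1)] by simp
  then show ?case
    using exp_lower_bound(1)[of t "\<lambda>s. y s j" "\<lambda>s. a (j - i) * y s (j - i)" "a j"]
      less.prems(2) gain_nonneg y_initial by simp
qed

lemma y_nonneg: "0 \<le> t \<Longrightarrow> ereal t \<le> ts \<Longrightarrow> 0 \<le> y t j"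
proof -
  assume t: "0 \<le> t" "ereal t \<le> ts"
  consider "j < i" | "j = i" | "i < j" by linarith
  then show ?thesis
  proof cases
    case 3
    have "0 \<le> exp (-(a j * t)) * y0 j" using y0_nonneg by simp
    then show ?thesis using y_exp_lower[OF 3 t] by linarith
  qed (use y_below[OF t(1)] yi_nonneg[OF t] in auto)
qed

lemma y_pos_if_initial_pos: "i < j \<Longrightarrow> 0 < y0 j \<Longrightarrow> 0 \<le> t \<Longrightarrow> ereal t \<le> ts \<Longrightarrow> 0 < y t j"
proof -
  assume "i < j" "0 < y0 j" "0 \<le> t" "ereal t \<le> ts"
  moreover from \<open>0 < y0 j\<close> have "0 < exp (-(a j * t)) * y0 j" by simp
  ultimately show ?thesis using y_exp_lower[of j t] by linarith
qed

lemma y_pos_from_source: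
  assumes j: "i < j" and t: "0 < t" "ereal t \<le> ts"
    and source: "\<And>s. 0 < s \<Longrightarrow> s < t \<Longrightarrow> 0 < y s (j - i)"
  shows "0 < y t j"
proof -
  have der: "((\<lambda>s. y s j) has_real_derivative (a (j - i) * y s (j - i) - a j * y s j)) (at s within {0..})"
    if "0 \<le> s" for s
    using y_deriv[OF that, of j] F_above[OF j] by simp
  have gain: "0 < a (j - i) * y s (j - i)" if "0 < s" "s < t" for s
    using source[OF that] a_pos_at[of "j - i"] j by simp
  have "exp (-(a j * t)) * y0 j < y t j"
    using exp_lower_bound(2)[of t "\<lambda>s. y s j" "\<lambda>s. a (j - i) * y s (j - i)" "a j", OF _ der]
      t(1) gain y_initial by (auto intro: less_imp_le)
  moreover have "0 \<le> exp (-(a j * t)) * y0 j" using y0_nonneg by simp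
  ultimately show ?thesis by linarith
qed

text \<open>The multiples \<open>k i\<close> are fed along the chain \<open>i \<rightarrow> 2 i \<rightarrow> 3 i \<rightarrow> \<dots>\<close>.\<close>

lemma y_multiple_pos: "2 \<le> k \<Longrightarrow> 0 < t \<Longrightarrow> ereal t \<le> ts \<Longrightarrow> 0 < y t (k * i)"
proof (induction k arbitrary: t rule: nat_induct_at_least)
  case base
  show ?case
  proof (rule y_pos_from_source)
    fix s assume "0 < s" "s < t"
    then have "ereal s < ts" using base.prems(2) by (auto intro: less_le_trans[of _ "ereal t"])
    then show "0 < y s (2 * i - i)" using yi_pos \<open>0 < s\<close> by simp
  qed (use base.prems i_pos in auto)
next
  case (Suc k)
  show ?case
  proof (rule y_pos_from_source)
    fix s assume "0 < s" "s < t"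
    then have "ereal s \<le> ts" using Suc.prems(2) by (auto intro: order_trans[of _ "ereal t"])
    then show "0 < y s (Suc k * i - i)" using Suc.IH[of s] \<open>0 < s\<close> by simp
  qed (use Suc.prems Suc.hyps i_pos in auto)
qed

text \<open>\<open>dy\<^sub>i/dt < 0\<close> on \<open>[0, t\<^sub>*]\<close>: before \<open>t\<^sub>*\<close> through \<open>y\<^sub>i > 0\<close>, at \<open>t\<^sub>*\<close> through \<open>y\<^sub>2\<^sub>i > 0\<close>.\<close>

lemma Fi_neg: "0 \<le> t \<Longrightarrow> ereal t \<le> ts \<Longrightarrow> F a i (y t) i < 0"
proof -
  assume t: "0 \<le> t" "ereal t \<le> ts"
  have rates: "summable (\<lambda>n. a (n + i) * y t (n + i))" using summable_rates[OF t(1)] .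
  have rates_nonneg: "0 \<le> a (n + i) * y t (n + i)" for n
    using a_pos_at[of "n + i"] y_nonneg[OF t, of "n + i"] i_pos by simp
  then have sum_nonneg: "0 \<le> (\<Sum>n. a (n + i) * y t (n + i))" by (rule suminf_nonneg[OF rates])
  show ?thesis
  proof (cases "ereal t < ts")
    case True
    then have "0 < a i * y t i" using yi_pos t a_pos_at[OF i_pos] by simp
    then show ?thesis unfolding F_at using sum_nonneg by linarith
  next
    case False
    then have "ts = ereal t" using t by simp
    then have "0 < t" using ts_pos by simp
    then have "0 < a (i + i) * y t (i + i)"
      using y_multiple_pos[of 2 t] t a_pos_at[of "i + i"] i_pos by (simp add: mult_2)
    then have "0 < (\<Sum>n. a (n + i) * y t (n + i))" using suminf_pos2[OF rates rates_nonneg, of i] by simp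
    moreover have "y t i = 0" using yi_zero \<open>ts = ereal t\<close> by simp
    ultimately show ?thesis unfolding F_at by simp
  qed
qed

text \<open>By continuity \<open>dy\<^sub>i/dt\<close> stays negative a little beyond a finite \<open>t\<^sub>*\<close>.\<close>

lemma Fi_neg_beyond:
  obtains ts1 where "ts \<le> ts1" "\<forall>t. ts = ereal t \<longrightarrow> ts < ts1"
    "\<forall>t. 0 \<le> t \<and> ereal t < ts1 \<longrightarrow> F a i (y t) i < 0"
proof (cases ts)
  case (real T)
  then have "0 \<le> T" using ts_pos by simp
  then obtain d where "0 < d" and d: "\<forall>s. 0 \<le> s \<and> \<bar>s - T\<bar> < d \<longrightarrow> F a i (y s) i < 0"
    using negative_near[OF F_continuous] Fi_neg real by blast
  have "F a i (y t) i < 0" if "0 \<le> t" "t < T + d" for t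
    using Fi_neg[of t] d[rule_format, of t] that real by (cases "t \<le> T") auto
  then show ?thesis using that[of "ereal (T + d)"] real \<open>0 < d\<close> by auto
qed (use that[of ts] Fi_neg ts_pos in auto)

lemma rate_nonneg: "0 \<le> s \<Longrightarrow> ereal s \<le> ts \<Longrightarrow> 0 \<le> a m * y s m"
  using y_below[of s 0] i_pos a_pos_at[of m] y_nonneg[of s m]
  by (cases "m = 0") (auto intro: mult_nonneg_nonneg)

lemma rate_le_mass: "0 \<le> s \<Longrightarrow> ereal s \<le> ts \<Longrightarrow> a m * y s m \<le> A * (real m * \<bar>y s m\<bar>)"
proof (cases "m = 0")
  case False
  assume s: "0 \<le> s" "ereal s \<le> ts"
  have "a m \<le> A * real m" using a_le False by simp
  then show ?thesis using y_nonneg[OF s, of m] by (simp add: mult_right_mono flip: mult.assoc)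
qed (use y_below[of s 0] i_pos in simp)

text \<open>The truncated mass \<open>\<Sum>\<^sub>j\<^sub><\<^sub>K j y\<^sub>j\<close> does not increase (all moment coefficients are \<open>\<le> 0\<close>).\<close>

lemma truncated_mass_nonincreasing:
  assumes t: "0 \<le> t" "ereal t \<le> ts"
  shows "(\<Sum>j<K. real j * y t j) \<le> (\<Sum>j<K. real j * y0 j)"
proof (cases "t = 0")
  case False
  then have "0 < t" using t by simp
  then obtain \<xi> where \<xi>: "0 < \<xi>" "\<xi> < t"
    "(\<Sum>j<K. real j * y t j) - (\<Sum>j<K. real j * y 0 j) = t * (\<Sum>j<K. real j * F a i (y \<xi>) j)"
    using mvt_on_halfline[OF _ moment_deriv] by blast
  have \<xi>': "0 \<le> \<xi>" "ereal \<xi> \<le> ts" using \<xi> t by (auto intro: order_trans[of _ "ereal t"])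
  have below: "\<forall>m<i. y \<xi> m = 0" using y_below[OF \<xi>'(1)] by simp
  note M = moment_identity[OF i_pos below summable_rates[OF \<xi>'(1)], where K=K and w=real]
  have "(\<Sum>j<K. real j * F a i (y \<xi>) j) \<le> (\<Sum>m. (0::real))"
    unfolding M(2) using rate_nonneg[OF \<xi>'] moment_coef_mass_nonpos[OF i_pos]
    by (intro suminf_le M(1) mult_nonneg_nonpos) auto
  then have "t * (\<Sum>j<K. real j * F a i (y \<xi>) j) \<le> 0"
    using \<open>0 < t\<close> by (simp add: mult_nonneg_nonpos)
  then show ?thesis using \<xi>(3) y_initial by simp
qed (simp add: y_initial)

lemma mass_nonincreasing:
  assumes t: "0 \<le> t" "ereal t \<le> ts"
  shows "norm11 (y t) \<le> norm11 y0"
  unfolding norm11_def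
proof (rule suminf_le_const)
  show "summable (\<lambda>j. real j * \<bar>y t j\<bar>)" using y_in_X11[OF t(1)] by (simp add: X11_def)
  fix n
  have "(\<Sum>j<n. real j * \<bar>y t j\<bar>) = (\<Sum>j<n. real j * y t j)" using y_nonneg[OF t] by simp
  also have "\<dots> \<le> (\<Sum>j<n. real j * y0 j)" by (rule truncated_mass_nonincreasing[OF t])
  also have "\<dots> = (\<Sum>j<n. real j * \<bar>y0 j\<bar>)" using y0_nonneg by simp
  also have "\<dots> \<le> norm11 y0" using norm11_split[OF y0_in_X11, of n] tail11_nonneg[OF y0_in_X11, of n] by simp
  finally show "(\<Sum>j<n. real j * \<bar>y t j\<bar>) \<le> (\<Sum>j. real j * \<bar>y0 j\<bar>)" by (simp add: norm11_def)
qed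

lemma capped_moment_lower:
  assumes t: "0 < t" "ereal t \<le> ts" and N: "i \<le> N" and K: "N < K"
  obtains \<xi> where "0 < \<xi>" "\<xi> < t"
    "(\<Sum>j<K. real (min j N) * y0 j)
       - t * (A * (real i * tail11 (N + 1 - i) (y \<xi>) + real N * tail11 (K - i) (y \<xi>)))
     \<le> (\<Sum>j<K. real (min j N) * y t j)"
proof -
  obtain \<xi> where \<xi>: "0 < \<xi>" "\<xi> < t"
    "(\<Sum>j<K. real (min j N) * y t j) - (\<Sum>j<K. real (min j N) * y 0 j)
       = t * (\<Sum>j<K. real (min j N) * F a i (y \<xi>) j)"
    using mvt_on_halfline[OF t(1) moment_deriv[where K=K and w="\<lambda>j. real (min j N)"]] by blast
  have \<xi>': "0 \<le> \<xi>" "ereal \<xi> \<le> ts" using \<xi> t by (auto intro: order_trans[of _ "ereal t"])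
  have below: "\<forall>m<i. y \<xi> m = 0" using y_below[OF \<xi>'(1)] by simp
  note M = moment_identity[OF i_pos below summable_rates[OF \<xi>'(1)],
      where K=K and w="\<lambda>j. real (min j N)"]
  define T1 T2 where "T1 = tail11 (N + 1 - i) (y \<xi>)" and "T2 = tail11 (K - i) (y \<xi>)"
  define c where "c m = real i * (if N + 1 - i \<le> m then 1 else 0) + real N * (if K - i \<le> m then 1 else 0)"
    for m
  have tails: "(\<lambda>m. - (A * (real m * \<bar>y \<xi> m\<bar> * c m))) sums (- (A * (real i * T1 + real N * T2)))"
  proof -
    have "(\<lambda>m. - (A * (real i * (if N + 1 - i \<le> m then real m * \<bar>y \<xi> m\<bar> else 0)
        + real N * (if K - i \<le> m then real m * \<bar>y \<xi> m\<bar> else 0))))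
        sums (- (A * (real i * T1 + real N * T2)))"
      unfolding T1_def T2_def tail11_def
      by (intro sums_minus sums_mult sums_add summable_sums summable_tail11 y_in_X11 \<xi>'(1))
    moreover have "real i * (if N + 1 - i \<le> m then real m * \<bar>y \<xi> m\<bar> else 0)
        + real N * (if K - i \<le> m then real m * \<bar>y \<xi> m\<bar> else 0) = real m * \<bar>y \<xi> m\<bar> * c m" for m
      unfolding c_def by (simp add: algebra_simps)
    ultimately show ?thesis by simp
  qed
  have "- (A * (real i * T1 + real N * T2))
      \<le> (\<Sum>j<K. real (min j N) * F a i (y \<xi>) j)"
    unfolding M(2) sums_unique[OF tails]
  proof (rule suminf_le[OF _ sums_summable[OF tails] M(1)])
    fix m
    have "a m * y \<xi> m * (- c m) \<le> a m * y \<xi> m * moment_coef i K (\<lambda>j. real (min j N)) m"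
      using moment_coef_capped_lower[OF i_pos N K, of m] rate_nonneg[OF \<xi>', of m]
      unfolding c_def by (intro mult_left_mono) auto
    moreover have "a m * y \<xi> m * c m \<le> A * (real m * \<bar>y \<xi> m\<bar>) * c m"
      using rate_le_mass[OF \<xi>', of m] unfolding c_def by (intro mult_right_mono) auto
    ultimately show "- (A * (real m * \<bar>y \<xi> m\<bar> * c m))
        \<le> a m * y \<xi> m * moment_coef i K (\<lambda>j. real (min j N)) m"
      by (simp add: algebra_simps)
  qed
  then have "t * (- (A * (real i * T1 + real N * T2))) \<le> t * (\<Sum>j<K. real (min j N) * F a i (y \<xi>) j)"
    using t(1) by (intro mult_left_mono) auto
  then show ?thesis using that[OF \<xi>(1,2)] \<xi>(3) y_initial unfolding T1_def T2_def by simp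
qed

text \<open>The capped moment lies between the current mass and the initial mass minus its tail, so
  the mass lost by time \<open>t\<close> is controlled by three tails.\<close>

lemma mass_defect:
  assumes t: "0 < t" "ereal t \<le> ts" and N: "i \<le> N" and K: "N < K"
  obtains \<xi> where "0 < \<xi>" "\<xi> < t"
    "norm11 y0 \<le> norm11 (y t) + tail11 N y0
       + t * (A * (real i * tail11 (N + 1 - i) (y \<xi>) + real N * tail11 (K - i) (y \<xi>)))"
proof -
  have t0: "0 \<le> t" using t by simp
  obtain \<xi> where \<xi>: "0 < \<xi>" "\<xi> < t"
    and lower: "(\<Sum>j<K. real (min j N) * y0 j)
       - t * (A * (real i * tail11 (N + 1 - i) (y \<xi>) + real N * tail11 (K - i) (y \<xi>)))
     \<le> (\<Sum>j<K. real (min j N) * y t j)"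
    using capped_moment_lower[OF t N K] by blast
  have "(\<Sum>j<K. real (min j N) * y t j) \<le> (\<Sum>j<K. real j * y t j)"
    using y_nonneg[OF t0 t(2)] by (intro sum_mono mult_right_mono) auto
  also have "\<dots> = (\<Sum>j<K. real j * \<bar>y t j\<bar>)" using y_nonneg[OF t0 t(2)] by simp
  also have "\<dots> \<le> norm11 (y t)"
    using norm11_split[OF y_in_X11[OF t0], of K] tail11_nonneg[OF y_in_X11[OF t0], of K] by simp
  finally have upper: "(\<Sum>j<K. real (min j N) * y t j) \<le> norm11 (y t)" .
  have "norm11 y0 - tail11 N y0 = (\<Sum>j<N. real (min j N) * y0 j)"
    using norm11_split[OF y0_in_X11, of N] y0_nonneg by simp
  also have "\<dots> \<le> (\<Sum>j<K. real (min j N) * y0 j)"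
    using y0_nonneg K by (intro sum_mono2) auto
  finally show ?thesis using that[OF \<xi>] lower upper by linarith
qed

text \<open>Choosing first \<open>N\<close> and then \<open>K\<close> so that the tails are small uniformly on \<open>[0, t]\<close>.\<close>

lemma mass_nondecreasing:
  assumes t: "0 \<le> t" "ereal t \<le> ts"
  shows "norm11 y0 \<le> norm11 (y t)"
proof (cases "t = 0")
  case False
  then have "0 < t" using t by simp
  have c_nonneg: "0 \<le> t * A * real n" for n using \<open>0 < t\<close> A_pos by simp
  show ?thesis
  proof (rule field_le_epsilon)
    fix e :: real assume "0 < e"
    obtain e1 where e1: "0 < e1" "e1 + t * A * real i * e1 = e / 2"
      using small_share[OF \<open>0 < e\<close> c_nonneg[of i]] by blast
    obtain L1 where L1: "\<forall>L\<ge>L1. \<forall>s\<in>{0..t}. tail11 L (y s) < e1"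
      using tail11_uniformly_small[OF y_in_X11 y_norm_continuous e1(1)] by blast
    define N where "N = L1 + i"
    obtain e2 where e2: "0 < e2" "e2 + t * A * real N * e2 = e / 2"
      using small_share[OF \<open>0 < e\<close> c_nonneg[of N]] by blast
    obtain L2 where L2: "\<forall>L\<ge>L2. \<forall>s\<in>{0..t}. tail11 L (y s) < e2"
      using tail11_uniformly_small[OF y_in_X11 y_norm_continuous e2(1)] by blast
    define K where "K = N + 1 + L2 + i"
    obtain \<xi> where \<xi>: "0 < \<xi>" "\<xi> < t" and defect:
      "norm11 y0 \<le> norm11 (y t) + tail11 N y0
         + t * (A * (real i * tail11 (N + 1 - i) (y \<xi>) + real N * tail11 (K - i) (y \<xi>)))"
      using mass_defect[OF \<open>0 < t\<close> t(2), of N K] unfolding N_def K_def by auto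
    have "tail11 N y0 < e1" using L1[rule_format, of N 0] t y_initial unfolding N_def by simp
    moreover have "t * (A * (real i * tail11 (N + 1 - i) (y \<xi>) + real N * tail11 (K - i) (y \<xi>)))
        \<le> t * A * real i * e1 + t * A * real N * e2"
    proof -
      have "tail11 (N + 1 - i) (y \<xi>) \<le> e1"
        using L1[rule_format, of "N + 1 - i" \<xi>] \<xi> unfolding N_def by simp
      moreover have "tail11 (K - i) (y \<xi>) \<le> e2"
        using L2[rule_format, of "K - i" \<xi>] \<xi> unfolding K_def by simp
      ultimately have "t * A * real i * tail11 (N + 1 - i) (y \<xi>) \<le> t * A * real i * e1"
        and "t * A * real N * tail11 (K - i) (y \<xi>) \<le> t * A * real N * e2"
        using c_nonneg by (simp_all add: mult_left_mono)
      then show ?thesis by (simp add: algebra_simps)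
    qed
    moreover have "e1 + t * A * real i * e1 + t * A * real N * e2 \<le> e" using e1 e2 by linarith
    ultimately show "norm11 y0 \<le> norm11 (y t) + e" using defect by linarith
  qed
qed (simp add: y_initial)

lemma mass_conserved: "0 \<le> t \<Longrightarrow> ereal t \<le> ts \<Longrightarrow> norm11 (y t) = norm11 y0"
  using mass_nonincreasing mass_nondecreasing by (simp add: order.antisym)

end

theorem proposition2p3:
  fixes i :: nat and a :: "nat \<Rightarrow> real" and A :: real
    and y0 :: "nat \<Rightarrow> real" and y :: "real \<Rightarrow> nat \<Rightarrow> real"
  assumes i: "i \<ge> 1"
    and A: "A > 0"
    and a_pos: "\<forall>j\<ge>1. a j > 0"
    and a_le: "\<forall>j\<ge>1. a j \<le> A * real j"
    and y0: "y0 \<in> X1i_plus i"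
    and y0i: "y0 i > 0"
    and sol: "is_solution a i y0 y"
  shows "\<exists>ts ts1 :: ereal. 0 < ts \<and> ts \<le> ts1 \<and>
     (\<forall>t::real. 0 \<le> t \<and> ereal t < ts \<longrightarrow> y t i > 0) \<and>
     (\<forall>t::real. ts = ereal t \<longrightarrow> y t i = 0) \<and>
     (\<forall>t::real. 0 < t \<and> ereal t < ts \<longrightarrow> (\<forall>k\<ge>2. y t (k * i) > 0)) \<and>
     (\<forall>t::real. 0 \<le> t \<and> ereal t < ts \<longrightarrow> (\<forall>j\<ge>i + 1. y t j \<ge> 0)) \<and>
     (\<forall>t::real. 0 \<le> t \<and> ereal t < ts \<longrightarrow> (\<forall>j\<ge>i + 1. y0 j > 0 \<longrightarrow> y t j > 0)) \<and>
     (\<forall>t::real. 0 \<le> t \<and> ereal t < ts1 \<longrightarrow> F a i (y t) i < 0) \<and>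
     (\<forall>t::real. 0 \<le> t \<and> ereal t < ts \<longrightarrow> norm11 (y t) = norm11 y0) \<and>
     (\<forall>t::real. ts = ereal t \<longrightarrow>
        ts < ts1 \<and>
        (\<forall>k\<ge>2. y t (k * i) > 0) \<and>
        (\<forall>j\<ge>i + 1. y t j \<ge> 0) \<and>
        (\<forall>j\<ge>i + 1. y0 j > 0 \<longrightarrow> y t j > 0) \<and>
        norm11 (y t) = norm11 y0)"
proof -
  interpret fragmentation_solution i a A y0 y
    using assms by unfold_locales
  obtain ts :: ereal where ts: "ts > 0" "\<forall>s. 0 \<le> s \<and> ereal s < ts \<longrightarrow> y s i > 0"
    "\<forall>s. ts = ereal s \<longrightarrow> y s i = 0"
    using first_zero[OF y0i] by blast
  interpret fragmentation_positive_phase i a A y0 y ts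
    using ts by unfold_locales
  obtain ts1 where ts1: "ts \<le> ts1" "\<forall>t. ts = ereal t \<longrightarrow> ts < ts1"
    "\<forall>t. 0 \<le> t \<and> ereal t < ts1 \<longrightarrow> F a i (y t) i < 0"
    using Fi_neg_beyond by blast
  have at_ts: "0 < t" if "ts = ereal t" for t using ts(1) that by simp
  show ?thesis
    using ts ts1 at_ts y_multiple_pos y_nonneg y_pos_if_initial_pos mass_conserved
    by (intro exI[of _ ts] exI[of _ ts1]) (auto simp: less_imp_le)
qed

end
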